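(* Let $G$ be a feasible graph. The election index of $G$, i.e. the minimum integer $r$ such that some deterministic algorithm, in which every node is given the port-labelled map of $G$, performs leader election in $G$ in time $r$, is equal to the smallest integer $\ell$ such that the augmented truncated views $\mathcal{B}^{\ell}(v)$ of all nodes $v$ of $G$ are pairwise distinct.
   Context: A graph is a simple undirected connected finite graph whose nodes have no identifiers; at each node $v$ of degree $d$ the incident edges carry distinct port numbers $0,\dots,d-1$ (port numbering is local: there is no relation between the two port numbers of an edge). The truncated view $\mathcal{V}^0(v)$ is a single node; $\mathcal{V}^{l+1}(v)$ is the port-labelled rooted tree whose root has, for every neighbour $v_i$ of $v$, a child $x_i$ such that the edge $\{x_0,x_i\}$ carries at $x_0$ the port number of $\{v,v_i\}$ at $v$ and at $x_i$ the port number of $\{v,v_i\}$ at $v_i$, and $x_i$ is the root of a copy of $\mathcal{V}^{l}(v_i)$. The view $\mathcal{V}(v)$ is the infinite tree whose truncation to depth $l$ is $\mathcal{V}^l(v)$ for every $l$. The augmented truncated view $\mathcal{B}^l(v)$ is $\mathcal{V}^l(v)$ with each leaf labelled by the degree in $G$ of the node it represents. A graph is feasible if the views $\mathcal{V}(v)$ of all its nodes are pairwise distinct. Communication model (LOCAL): computation proceeds in synchronous rounds, all nodes start simultaneously, and in each round every node exchanges arbitrary messages with all its neighbours and performs arbitrary local computation; the information a node $v$ obtains about the graph in $r$ rounds is exactly $\mathcal{B}^r(v)$. Leader election: every node $v$ must output a sequence $(p_1,q_1,\dots,p_k,q_k)$ of nonnegative integers such that there is a simple path starting at $v$ whose $i$-th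 edge has port $p_i$ at its endpoint closer to $v$ along the path and port $q_i$ at its other endpoint, and all these paths (over all nodes $v$) end at a common node, the leader. The time of an algorithm is the number of rounds until all nodes have output. *)

theory Defs
  imports Main
begin

text \<open>A graph is given by a vertex set V, a symmetric irreflexive adjacency
relation E on V, and a port function: port v w is the port number of the
edge {v,w} at v.\<close>

definition deg :: "('v \<Rightarrow> 'v \<Rightarrow> bool) \<Rightarrow> 'v \<Rightarrow> nat" where
  "deg E v = card {w. E v w}"

definition port_graph :: "'v set \<Rightarrow> ('v \<Rightarrow> 'v \<Rightarrow> bool) \<Rightarrow> ('v \<Rightarrow> 'v \<Rightarrow> nat) \<Rightarrow> bool" where
  "port_graph V E port \<longleftrightarrow>
     finite V \<and> V \<noteq> {} \<and>
     (\<forall>v w. E v w \<longrightarrow> v \<in> V \<and> w \<in> V) \<and>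
     (\<forall>v w. E v w \<longrightarrow> E w v) \<and>
     (\<forall>v. \<not> E v v) \<and>
     (\<forall>v\<in>V. \<forall>w\<in>V. E\<^sup>*\<^sup>* v w) \<and>
     (\<forall>v\<in>V. bij_betw (port v) {w. E v w} {0..<deg E v})"

definition nbr :: "('v \<Rightarrow> 'v \<Rightarrow> bool) \<Rightarrow> ('v \<Rightarrow> 'v \<Rightarrow> nat) \<Rightarrow> 'v \<Rightarrow> nat \<Rightarrow> 'v" where
  "nbr E port v p = (THE w. E v w \<and> port v w = p)"

text \<open>Port-labelled rooted trees, in canonical form: the children of a node
are listed in increasing order of the port number at the parent; each child
entry records (port at parent, port at child, subtree).\<close>

datatype vtree = VNode "(nat \<times> nat \<times> vtree) list"

text \<open>Trees with degree-labelled leaves (for augmented truncated views).\<close>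
datatype btree = BLeaf nat | BNode "(nat \<times> nat \<times> btree) list"

fun tview :: "('v \<Rightarrow> 'v \<Rightarrow> bool) \<Rightarrow> ('v \<Rightarrow> 'v \<Rightarrow> nat) \<Rightarrow> nat \<Rightarrow> 'v \<Rightarrow> vtree" where
  "tview E port 0 v = VNode []"
| "tview E port (Suc l) v =
     VNode (map (\<lambda>p. (p, port (nbr E port v p) v, tview E port l (nbr E port v p))) [0..<deg E v])"

fun aview :: "('v \<Rightarrow> 'v \<Rightarrow> bool) \<Rightarrow> ('v \<Rightarrow> 'v \<Rightarrow> nat) \<Rightarrow> nat \<Rightarrow> 'v \<Rightarrow> btree" where
  "aview E port 0 v = BLeaf (deg E v)"
| "aview E port (Suc l) v =
     BNode (map (\<lambda>p. (p, port (nbr E port v p) v, aview E port l (nbr E port v p))) [0..<deg E v])"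

text \<open>The (infinite) view V(v), represented by the family of all its
truncations.\<close>
definition view :: "('v \<Rightarrow> 'v \<Rightarrow> bool) \<Rightarrow> ('v \<Rightarrow> 'v \<Rightarrow> nat) \<Rightarrow> 'v \<Rightarrow> (nat \<Rightarrow> vtree)" where
  "view E port v = (\<lambda>l. tview E port l v)"

definition feasible :: "'v set \<Rightarrow> ('v \<Rightarrow> 'v \<Rightarrow> bool) \<Rightarrow> ('v \<Rightarrow> 'v \<Rightarrow> nat) \<Rightarrow> bool" where
  "feasible V E port \<longleftrightarrow> (\<forall>v\<in>V. \<forall>w\<in>V. v \<noteq> w \<longrightarrow> view E port v \<noteq> view E port w)"

text \<open>An node_output sequence (p1,q1,...,pk,qk) is represented as [(p1,q1),...,(pk,qk)].\<close>
definition port_path :: "('v \<Rightarrow> 'v \<Rightarrow> bool) \<Rightarrow> ('v \<Rightarrow> 'v \<Rightarrow> nat) \<Rightarrow> 'v \<Rightarrow> (nat \<times> nat) list \<Rightarrow> 'v list \<Rightarrow> bool" where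
  "port_path E port v ps xs \<longleftrightarrow>
     length xs = length ps + 1 \<and> hd xs = v \<and> distinct xs \<and>
     (\<forall>i < length ps. E (xs!i) (xs!Suc i) \<and>
        port (xs!i) (xs!Suc i) = fst (ps!i) \<and> port (xs!Suc i) (xs!i) = snd (ps!i))"

text \<open>A deterministic algorithm (which may depend on the map of G, since it is
chosen for the given G) in the LOCAL model: after t rounds a node knows exactly
B^t(v); A t b = Some out means a node whose knowledge after t rounds is b
outputs out at round t, None means it does not node_output yet.\<close>
type_synonym algorithm = "nat \<Rightarrow> btree \<Rightarrow> (nat \<times> nat) list option"

definition out_round :: "('v \<Rightarrow> 'v \<Rightarrow> bool) \<Rightarrow> ('v \<Rightarrow> 'v \<Rightarrow> nat) \<Rightarrow> algorithm \<Rightarrow> 'v \<Rightarrow> nat" where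
  "out_round E port A v = (LEAST t. A t (aview E port t v) \<noteq> None)"

definition node_output :: "('v \<Rightarrow> 'v \<Rightarrow> bool) \<Rightarrow> ('v \<Rightarrow> 'v \<Rightarrow> nat) \<Rightarrow> algorithm \<Rightarrow> 'v \<Rightarrow> (nat \<times> nat) list" where
  "node_output E port A v = the (A (out_round E port A v) (aview E port (out_round E port A v) v))"

definition run_time :: "'v set \<Rightarrow> ('v \<Rightarrow> 'v \<Rightarrow> bool) \<Rightarrow> ('v \<Rightarrow> 'v \<Rightarrow> nat) \<Rightarrow> algorithm \<Rightarrow> nat" where
  "run_time V E port A = Max (out_round E port A ` V)"

definition elects :: "'v set \<Rightarrow> ('v \<Rightarrow> 'v \<Rightarrow> bool) \<Rightarrow> ('v \<Rightarrow> 'v \<Rightarrow> nat) \<Rightarrow> algorithm \<Rightarrow> bool" where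
  "elects V E port A \<longleftrightarrow>
     (\<forall>v\<in>V. \<exists>t. A t (aview E port t v) \<noteq> None) \<and>
     (\<exists>leader\<in>V. \<forall>v\<in>V. \<exists>xs. port_path E port v (node_output E port A v) xs \<and> last xs = leader)"

definition election_index :: "'v set \<Rightarrow> ('v \<Rightarrow> 'v \<Rightarrow> bool) \<Rightarrow> ('v \<Rightarrow> 'v \<Rightarrow> nat) \<Rightarrow> nat" where
  "election_index V E port = (LEAST r. \<exists>A. elects V E port A \<and> run_time V E port A = r)"

end

theory Submission
  imports Defs "HOL-Library.Transitive_Closure_Table"
begin

text \<open>Two nodes with equal augmented views at depth \<open>r\<close> receive exactly the
same information during the first \<open>r\<close> rounds, so an algorithm of run time \<open>r\<close>
gives them the same output; as the port sequence together with the common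
endpoint determines a path backwards, they would be the same node. Hence any
election time separates all nodes by their augmented views. Conversely, once
the depth-\<open>l\<close> augmented views are pairwise distinct, every node can identify
itself in the map of the graph after \<open>l\<close> rounds and output a path to a fixed
node. Feasibility guarantees that such an \<open>l\<close> exists.\<close>

definition views_distinct :: "'v set \<Rightarrow> ('v \<Rightarrow> 'v \<Rightarrow> bool) \<Rightarrow> ('v \<Rightarrow> 'v \<Rightarrow> nat) \<Rightarrow> nat \<Rightarrow> bool" where
  "views_distinct V E port l \<longleftrightarrow> (\<forall>v\<in>V. \<forall>w\<in>V. v \<noteq> w \<longrightarrow> aview E port l v \<noteq> aview E port l w)"

lemma map_upt_eq_map_upt_iff:
  "map f [0..<a] = map g [0..<b] \<longleftrightarrow> a = b \<and> (\<forall>p<a. f p = g p)"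
proof
  assume eq: "map f [0..<a] = map g [0..<b]"
  then have "a = b" by (metis length_map length_upt diff_zero)
  with eq show "a = b \<and> (\<forall>p<a. f p = g p)" by simp
qed simp

lemma aview_Suc_eq_iff:
  "aview E port (Suc l) v = aview E port (Suc l) w \<longleftrightarrow>
     deg E v = deg E w \<and>
     (\<forall>p<deg E v. port (nbr E port v p) v = port (nbr E port w p) w \<and>
        aview E port l (nbr E port v p) = aview E port l (nbr E port w p))"
  by (auto simp: map_upt_eq_map_upt_iff)

lemma tview_Suc_eq_iff:
  "tview E port (Suc l) v = tview E port (Suc l) w \<longleftrightarrow>
     deg E v = deg E w \<and>
     (\<forall>p<deg E v. port (nbr E port v p) v = port (nbr E port w p) w \<and>
        tview E port l (nbr E port v p) = tview E port l (nbr E port w p))"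
  by (auto simp: map_upt_eq_map_upt_iff)

lemma aview_eq_SucD:
  "aview E port (Suc l) v = aview E port (Suc l) w \<Longrightarrow> aview E port l v = aview E port l w"
proof (induction l arbitrary: v w)
  case 0
  then show ?case by (simp add: map_upt_eq_map_upt_iff)
next
  case (Suc l)
  from Suc.prems have "deg E v = deg E w \<and>
     (\<forall>p<deg E v. port (nbr E port v p) v = port (nbr E port w p) w \<and>
        aview E port (Suc l) (nbr E port v p) = aview E port (Suc l) (nbr E port w p))"
    by (rule aview_Suc_eq_iff[THEN iffD1])
  with Suc.IH show ?case
    unfolding aview_Suc_eq_iff[of E port l v w] by blast
qed

lemma aview_eq_le:
  assumes "aview E port s v = aview E port s w" and "t \<le> s"
  shows "aview E port t v = aview E port t w"
  using \<open>t \<le> s\<close> assms(1) by (induction rule: inc_induct) (auto intro: aview_eq_SucD)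

lemma aview_eq_imp_tview_eq:
  "aview E port l v = aview E port l w \<Longrightarrow> tview E port l v = tview E port l w"
proof (induction l arbitrary: v w)
  case (Suc l)
  from Suc.prems have "deg E v = deg E w \<and>
     (\<forall>p<deg E v. port (nbr E port v p) v = port (nbr E port w p) w \<and>
        aview E port l (nbr E port v p) = aview E port l (nbr E port w p))"
    by (rule aview_Suc_eq_iff[THEN iffD1])
  with Suc.IH show ?case
    unfolding tview_Suc_eq_iff by blast
qed simp

text \<open>Distinctness of augmented views is upward closed, so each pair of nodes
is eventually separated, and finitely many pairs are separated simultaneously.\<close>

lemma feasible_imp_views_distinct:
  assumes "finite V" and "feasible V E port"
  shows "\<exists>l. views_distinct V E port l"
proof -
  have "eventually (\<lambda>l. v \<noteq> w \<longrightarrow> aview E port l v \<noteq> aview E port l w) sequentially"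
    if "v \<in> V" "w \<in> V" for v w
  proof (cases "v = w")
    case False
    with that assms(2) have "view E port v \<noteq> view E port w"
      by (auto simp: feasible_def)
    then obtain l where "tview E port l v \<noteq> tview E port l w"
      by (auto simp: view_def)
    then have "aview E port l v \<noteq> aview E port l w"
      by (metis aview_eq_imp_tview_eq)
    then show ?thesis
      unfolding eventually_sequentially by (meson aview_eq_le)
  qed simp
  with assms(1) have "eventually (views_distinct V E port) sequentially"
    unfolding views_distinct_def by (simp add: eventually_ball_finite_distrib)
  then show ?thesis
    by (metis eventually_sequentially order_refl)
qed

lemma port_graph_port_inj:
  assumes "port_graph V E port" and "E u a" and "E u b" and "port u a = port u b"
  shows "a = b"
proof -
  have "u \<in> V" using assms(1,2) by (auto simp: port_graph_def)
  with assms(1) have "inj_on (port u) {w. E u w}"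
    by (auto simp: port_graph_def bij_betw_def)
  with assms(2-4) show ?thesis by (auto dest: inj_onD)
qed

text \<open>Walking backwards from the common endpoint, the port at the far end of
each edge identifies its near end.\<close>

lemma port_path_unique:
  assumes "port_graph V E port"
    and xs: "port_path E port v ps xs" and ys: "port_path E port w ps ys"
    and "last xs = last ys"
  shows "xs = ys"
proof -
  have len: "length xs = Suc (length ps)" "length ys = Suc (length ps)"
    using xs ys by (auto simp: port_path_def)
  have "xs ! i = ys ! i" if "i \<le> length ps" for i
    using that
  proof (induction rule: inc_induct)
    case base
    show ?case using \<open>last xs = last ys\<close> len by (metis diff_Suc_1 last_conv_nth list.size(3) nat.distinct(1))
  next
    case (step i)
    have "E (xs ! Suc i) (xs ! i)" "E (ys ! Suc i) (ys ! i)"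
      "port (xs ! Suc i) (xs ! i) = port (ys ! Suc i) (ys ! i)"
      using xs ys step.hyps assms(1) by (auto simp: port_path_def port_graph_def)
    then show ?case using step.IH port_graph_port_inj[OF assms(1)] by metis
  qed
  with len show ?thesis by (simp add: nth_equalityI)
qed

lemma rtranclp_imp_port_path:
  assumes "E\<^sup>*\<^sup>* v u"
  shows "\<exists>ps xs. port_path E port v ps xs \<and> last xs = u"
proof -
  obtain ws where ws: "rtrancl_path E v ws u" "distinct (v # ws)"
    using assms by (metis rtranclp_eq_rtrancl_path rtrancl_path_distinct)
  define xs where "xs = v # ws"
  define ps where "ps = map (\<lambda>i. (port (xs ! i) (xs ! Suc i), port (xs ! Suc i) (xs ! i))) [0..<length ws]"
  have "port_path E port v ps xs"
    using ws rtrancl_path_nth[OF ws(1)] by (auto simp: port_path_def ps_def xs_def)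
  moreover have "last xs = u"
    using ws(1) by (cases ws) (auto simp: xs_def elim: rtrancl_path.cases dest: rtrancl_path_last)
  ultimately show ?thesis by blast
qed

lemma out_round_le_run_time:
  "finite V \<Longrightarrow> v \<in> V \<Longrightarrow> out_round E port A v \<le> run_time V E port A"
  by (simp add: run_time_def)

lemma out_round_output:
  "\<exists>t. A t (aview E port t v) \<noteq> None \<Longrightarrow>
     A (out_round E port A v) (aview E port (out_round E port A v) v) \<noteq> None"
  unfolding out_round_def by (rule LeastI_ex)

lemma aview_eq_imp_same_output:
  assumes "\<exists>t. A t (aview E port t v) \<noteq> None"
    and "out_round E port A v \<le> r" and "aview E port r v = aview E port r w"
  shows "out_round E port A w = out_round E port A v \<and> node_output E port A w = node_output E port A v"
proof -
  let ?tv = "out_round E port A v" and ?tw = "out_round E port A w"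
  have same: "aview E port t v = aview E port t w" if "t \<le> r" for t
    using aview_eq_le[OF assms(3) that] .
  have dv: "A ?tv (aview E port ?tv w) \<noteq> None"
    using out_round_output[of A E port v, OF assms(1)] same[OF assms(2)] by simp
  then have "?tw \<le> ?tv"
    unfolding out_round_def[of E port A w] by (rule Least_le)
  moreover have "A ?tw (aview E port ?tw v) \<noteq> None"
    using out_round_output[of A E port w] dv same \<open>?tw \<le> ?tv\<close> assms(2) by fastforce
  then have "?tv \<le> ?tw"
    unfolding out_round_def[of E port A v] by (rule Least_le)
  ultimately have "?tw = ?tv" by simp
  with same[OF assms(2)] show ?thesis by (simp add: node_output_def)
qed

lemma elects_imp_views_distinct:
  assumes "port_graph V E port" and "elects V E port A"
  shows "views_distinct V E port (run_time V E port A)"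
  unfolding views_distinct_def
proof (intro ballI impI notI)
  fix v w assume v: "v \<in> V" and w: "w \<in> V" and "v \<noteq> w"
    and eq: "aview E port (run_time V E port A) v = aview E port (run_time V E port A) w"
  have "finite V" using assms(1) by (simp add: port_graph_def)
  then have same: "node_output E port A w = node_output E port A v"
    using aview_eq_imp_same_output[OF _ out_round_le_run_time eq] assms(2) v by (auto simp: elects_def)
  obtain leader where "\<forall>u\<in>V. \<exists>xs. port_path E port u (node_output E port A u) xs \<and> last xs = leader"
    using assms(2) by (auto simp: elects_def)
  with v w obtain xs ys where "port_path E port v (node_output E port A v) xs"
    "port_path E port w (node_output E port A v) ys" "last xs = last ys"
    using same by metis
  then have "xs = ys" using port_path_unique[OF assms(1)] by blast
  with \<open>port_path E port v _ xs\<close> \<open>port_path E port w _ ys\<close> \<open>v \<noteq> w\<close> show False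
    by (simp add: port_path_def)
qed

definition route_at :: "'v set \<Rightarrow> ('v \<Rightarrow> 'v \<Rightarrow> bool) \<Rightarrow> ('v \<Rightarrow> 'v \<Rightarrow> nat) \<Rightarrow> nat \<Rightarrow> 'v \<Rightarrow> algorithm" where
  "route_at V E port l target = (\<lambda>t b. if t = l
     then Some (SOME ps. \<exists>v\<in>V. aview E port l v = b \<and> (\<exists>xs. port_path E port v ps xs \<and> last xs = target))
     else None)"

lemma out_round_route_at: "out_round E port (route_at V E port l target) v = l"
  unfolding out_round_def by (rule Least_equality) (auto simp: route_at_def split: if_split_asm)

lemma route_at_elects:
  assumes "port_graph V E port" and "views_distinct V E port l" and "target \<in> V"
  shows "elects V E port (route_at V E port l target) \<and> run_time V E port (route_at V E port l target) = l"
proof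
  let ?A = "route_at V E port l target"
  have "\<exists>xs. port_path E port v (node_output E port ?A v) xs \<and> last xs = target" if v: "v \<in> V" for v
  proof -
    let ?Q = "\<lambda>ps. \<exists>u\<in>V. aview E port l u = aview E port l v \<and> (\<exists>xs. port_path E port u ps xs \<and> last xs = target)"
    have "E\<^sup>*\<^sup>* v target" using assms(1,3) v by (simp add: port_graph_def)
    then have "\<exists>ps. ?Q ps" using v by (metis rtranclp_imp_port_path)
    then have "?Q (node_output E port ?A v)"
      unfolding node_output_def out_round_route_at by (simp add: route_at_def) (rule someI_ex)
    then show ?thesis using assms(2) v by (metis views_distinct_def)
  qed
  with assms(3) show "elects V E port ?A"
    by (auto simp: elects_def route_at_def)
  have "V \<noteq> {}" using assms(3) by blast
  then show "run_time V E port ?A = l"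
    by (simp add: run_time_def out_round_route_at image_constant_conv)
qed

theorem proposition1:
  fixes V :: "'v set" and E :: "'v \<Rightarrow> 'v \<Rightarrow> bool" and port :: "'v \<Rightarrow> 'v \<Rightarrow> nat"
  assumes "port_graph V E port"
    and "feasible V E port"
  shows "election_index V E port =
    (LEAST l. \<forall>v\<in>V. \<forall>w\<in>V. v \<noteq> w \<longrightarrow> aview E port l v \<noteq> aview E port l w)"
proof -
  define L where "L = (LEAST l. views_distinct V E port l)"
  have "finite V" and "V \<noteq> {}" using assms(1) by (auto simp: port_graph_def)
  then obtain target where "target \<in> V" by blast
  have "views_distinct V E port L"
    unfolding L_def using feasible_imp_views_distinct[OF \<open>finite V\<close> assms(2)] by (rule LeastI_ex)
  then have "\<exists>A. elects V E port A \<and> run_time V E port A = L"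
    using route_at_elects[OF assms(1) _ \<open>target \<in> V\<close>] by blast
  moreover have "L \<le> r" if "\<exists>A. elects V E port A \<and> run_time V E port A = r" for r
    using that elects_imp_views_distinct[OF assms(1)] unfolding L_def by (metis Least_le)
  ultimately have "election_index V E port = L"
    unfolding election_index_def by (rule Least_equality)
  then show ?thesis by (simp add: L_def views_distinct_def)
qed

end
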